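(* Let $g:\mathbb{R}^n\to\mathbb{R}\cup\{+\infty\}$ be a proper closed convex function and let $f:\mathbb{R}^n\to\mathbb{R}$ be convex and differentiable with $\nabla f$ Lipschitz continuous with modulus $L>0$. Let $F=f+g$, and assume $\inf F>-\infty$ and that this infimum is attained. Let $\mathcal X=\{x:0\in\nabla f(x)+\partial g(x)\}$, and suppose: (a) (error bound) for any $\xi\ge\inf F$ there exist $\epsilon>0$ and $\tau>0$ such that $\operatorname{dist}(x,\mathcal X)\le\tau\|\mathrm{Prox}_{\frac1L g}(x-\tfrac1L\nabla f(x))-x\|$ whenever $\|\mathrm{Prox}_{\frac1L g}(x-\tfrac1L\nabla f(x))-x\|<\epsilon$ and $F(x)\le\xi$; (b) there exists $\delta>0$ such that $\|x-y\|\ge\delta$ whenever $x,y\in\mathcal X$ and $F(x)\ne F(y)$. Let $\{x^k\}$ be generated by FISTA with the fixed restart scheme, or by FISTA with both the fixed and the adaptive restart schemes (described in the context). Then: (i) $\{x^k\}$ converges $R$-linearly to a globally optimal solution of $\min F$; (ii) $\{F(x^k)\}$ converges $R$-linearly to the optimal value $\min F$.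
   Context: For a proper closed convex $h$, $\mathrm{Prox}_h(v)=\arg\min_{x\in\mathbb{R}^n}\{h(x)+\tfrac12\|x-v\|^2\}$; $\partial g$ is the convex subdifferential. FISTA: given $x^0\in\operatorname{dom} g$, set $x^{-1}=x^0$, $\theta_{-1}=\theta_0=1$, and for $k=0,1,2,\dots$: $\beta_k=(\theta_{k-1}-1)/\theta_k$, $y^k=x^k+\beta_k(x^k-x^{k-1})$, $x^{k+1}=\mathrm{Prox}_{\frac1L g}(y^k-\tfrac1L\nabla f(y^k))$, $\theta_{k+1}=(1+\sqrt{1+4\theta_k^2})/2$. Fixed restart scheme: for a fixed positive integer $K$, reset $\theta_{k-1}=\theta_k=1$ every $K$ iterations. Adaptive (gradient) restart scheme: reset $\theta_k=\theta_{k+1}=1$ whenever $\langle y^k-x^{k+1},x^{k+1}-x^k\rangle>0$. A sequence converges $R$-linearly to a limit $x^*$ if $\limsup_{k\to\infty}\|x^k-x^*\|^{1/k}<1$. *)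

theory Defs
  imports "HOL-Analysis.Analysis" "HOL-Library.Extended_Real" "HOL-Library.Liminf_Limsup"
begin

text \<open>Extended-real-valued functions g : R^n -> R \<union> {+inf}.  The space R^n is
  modelled by an arbitrary Euclidean space type.\<close>

definition epigraph :: "('a \<Rightarrow> ereal) \<Rightarrow> ('a \<times> real) set" where
  "epigraph g = {(x, t). g x \<le> ereal t}"

definition proper_closed_convex :: "('a::euclidean_space \<Rightarrow> ereal) \<Rightarrow> bool" where
  "proper_closed_convex g \<longleftrightarrow>
     (\<forall>x. g x \<noteq> -\<infinity>) \<and> (\<exists>x. g x \<noteq> \<infinity>) \<and>
     closed (epigraph g) \<and> convex (epigraph g)"

definition prox :: "('a::euclidean_space \<Rightarrow> ereal) \<Rightarrow> 'a \<Rightarrow> 'a" where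
  "prox h v = (SOME x. \<forall>z. h x + ereal (norm (x - v) ^ 2 / 2) \<le> h z + ereal (norm (z - v) ^ 2 / 2))"

definition subdiff :: "('a::euclidean_space \<Rightarrow> ereal) \<Rightarrow> 'a \<Rightarrow> 'a set" where
  "subdiff g x = {v. g x \<noteq> \<infinity> \<and> (\<forall>y. g x + ereal (inner v (y - x)) \<le> g y)}"

text \<open>FISTA with fixed restart (period K) and optionally adaptive (gradient) restart.
  State at iteration k: (x^{k-1}, x^k, theta_{k-1}, theta_k), before the fixed restart
  test at iteration k.\<close>
primrec fista_state :: "real \<Rightarrow> ('a::euclidean_space \<Rightarrow> 'a) \<Rightarrow> ('a \<Rightarrow> ereal) \<Rightarrow> nat \<Rightarrow> bool
    \<Rightarrow> 'a \<Rightarrow> nat \<Rightarrow> 'a \<times> 'a \<times> real \<times> real" where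
  "fista_state L gf g K adaptive x0 0 = (x0, x0, 1, 1)"
| "fista_state L gf g K adaptive x0 (Suc k) =
     (case fista_state L gf g K adaptive x0 k of (xp, xc, tp0, tc0) \<Rightarrow>
       let tp = (if K dvd k then 1 else tp0);
           tc = (if K dvd k then 1 else tc0);
           \<beta> = (tp - 1) / tc;
           y = xc + \<beta> *\<^sub>R (xc - xp);
           xn = prox (\<lambda>z. ereal (1 / L) * g z) (y - (1 / L) *\<^sub>R gf y);
           tn = (1 + sqrt (1 + 4 * tc ^ 2)) / 2
       in if adaptive \<and> inner (y - xn) (xn - xc) > 0 then (xc, xn, 1, 1)
          else (xc, xn, tc, tn))"

definition fista_x :: "real \<Rightarrow> ('a::euclidean_space \<Rightarrow> 'a) \<Rightarrow> ('a \<Rightarrow> ereal) \<Rightarrow> nat \<Rightarrow> bool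
    \<Rightarrow> 'a \<Rightarrow> nat \<Rightarrow> 'a" where
  "fista_x L gf g K adaptive x0 k = fst (snd (fista_state L gf g K adaptive x0 k))"

end

theory Submission
  imports Defs
begin

text \<open>
  The fixed restart keeps the extrapolation weights \<open>\<beta>\<^sub>k\<close> below \<open>1 - 1/K < 1\<close>; the adaptive
  restart only resets \<open>\<theta>\<close> and does not affect this bound. Consequently the energy
  \<open>E\<^sub>k = F(x\<^sub>k) - min F + L/2 \<parallel>x\<^sub>k - x\<^sub>k\<^sub>-\<^sub>1\<parallel>\<^sup>2\<close> decreases by at least \<open>c \<parallel>x\<^sub>k - x\<^sub>k\<^sub>-\<^sub>1\<parallel>\<^sup>2\<close> per step,
  by the sufficient decrease property of the forward-backward step, and the steps tend to \<open>0\<close>.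
  Once they are small, the error bound applied at \<open>x\<^sub>k\<close> gives \<open>E\<^sub>k\<^sub>+\<^sub>1 \<le> C (\<parallel>x\<^sub>k - x\<^sub>k\<^sub>-\<^sub>1\<parallel>\<^sup>2 + \<parallel>x\<^sub>k\<^sub>+\<^sub>1 - x\<^sub>k\<parallel>\<^sup>2)\<close>,
  and the decrease estimate bounds the right-hand side by \<open>C/c (E\<^sub>k - E\<^sub>k\<^sub>+\<^sub>2)\<close>. Hence
  \<open>E\<^sub>k\<^sub>+\<^sub>2 \<le> \<rho> E\<^sub>k\<close> with \<open>\<rho> < 1\<close>, so \<open>E\<^sub>k\<close> decays geometrically. Both \<open>F(x\<^sub>k) - min F\<close> and the
  step lengths are controlled by \<open>E\<^sub>k\<close>, so the values converge R-linearly and the iterates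
  converge R-linearly to a limit, which the error bound places in \<open>\<X>\<close>.

  For convex \<open>f\<close> and \<open>g\<close> the stationary points are exactly the global minimisers.
\<close>

lemma nonneg_if_nonneg_add_small_multiple:
  fixes a c :: real
  assumes "\<And>t. 0 < t \<Longrightarrow> t \<le> 1 \<Longrightarrow> 0 \<le> a + t * c"
  shows "0 \<le> a"
proof (rule tendsto_lowerbound[OF _ _ trivial_limit_at_right_real])
  show "((\<lambda>t. a + t * c) \<longlongrightarrow> a) (at_right 0)"
    by (auto intro!: tendsto_eq_intros)
  show "\<forall>\<^sub>F t in at_right 0. 0 \<le> a + t * c"
    unfolding eventually_at_right_field using assms by (intro exI[of _ 1]) auto
qed

lemma norm_add_scaleR_power2:
  fixes x y :: "'a::real_inner"
  shows "norm (x + t *\<^sub>R y) ^ 2 = norm x ^ 2 + 2 * t * inner x y + t ^ 2 * norm y ^ 2"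
  unfolding power2_norm_eq_inner
  by (simp add: inner_add_left inner_add_right inner_commute power2_eq_square algebra_simps)

lemma norm_midpoint_diff_power2:
  fixes a b v :: "'a::real_inner"
  shows "norm ((1/2) *\<^sub>R a + (1/2) *\<^sub>R b - v) ^ 2
           = (norm (a - v) ^ 2 + norm (b - v) ^ 2) / 2 - norm (a - b) ^ 2 / 4"
proof -
  have "(1/2) *\<^sub>R a + (1/2) *\<^sub>R b - v = (1/2) *\<^sub>R ((a - v) + (b - v))"
    by (simp add: algebra_simps flip: scaleR_add_left)
  moreover have "a - b = (a - v) - (b - v)" by simp
  ultimately show ?thesis
    unfolding power2_norm_eq_inner
    by (simp add: inner_add_left inner_add_right inner_diff_left inner_diff_right inner_commute
        field_simps del: diff_diff_eq2)
qed

lemma convex_on_gradient_ineq: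
  fixes f :: "'a::real_normed_vector \<Rightarrow> real"
  assumes convex: "convex_on UNIV f" and deriv: "(f has_derivative f') (at x)"
  shows "f x + f' (y - x) \<le> f y"
proof -
  define \<psi> where "\<psi> t = f (x + t *\<^sub>R (y - x))" for t :: real
  have "convex_on UNIV \<psi>"
  proof (rule convex_onI)
    fix t a b :: real assume "0 < t" "t < 1"
    have "\<psi> ((1 - t) *\<^sub>R a + t *\<^sub>R b)
          = f ((1 - t) *\<^sub>R (x + a *\<^sub>R (y - x)) + t *\<^sub>R (x + b *\<^sub>R (y - x)))"
      unfolding \<psi>_def by (simp add: algebra_simps)
    also have "\<dots> \<le> (1 - t) * \<psi> a + t * \<psi> b"
      unfolding \<psi>_def using \<open>0 < t\<close> \<open>t < 1\<close> by (intro convex_onD[OF convex]) auto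
    finally show "\<psi> ((1 - t) *\<^sub>R a + t *\<^sub>R b) \<le> (1 - t) * \<psi> a + t * \<psi> b" .
  qed simp
  moreover have "(\<psi> has_field_derivative f' (y - x)) (at 0)"
  proof -
    have line: "((\<lambda>t. x + t *\<^sub>R (y - x)) has_derivative (\<lambda>t. t *\<^sub>R (y - x))) (at 0)"
      by (auto intro!: derivative_eq_intros)
    have "(f has_derivative f') (at (x + 0 *\<^sub>R (y - x)))" using deriv by simp
    from has_derivative_compose[OF line this]
    have "(\<psi> has_derivative (\<lambda>t. f' (t *\<^sub>R (y - x)))) (at 0)"
      unfolding \<psi>_def o_def .
    moreover have "(\<lambda>t. f' (t *\<^sub>R (y - x))) = (*) (f' (y - x))"
      using has_derivative_linear[OF deriv] linear_scale by fastforce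
    ultimately show ?thesis by (simp add: has_field_derivative_def)
  qed
  ultimately have "f' (y - x) \<le> \<psi> 1 - \<psi> 0"
    using convex_on_imp_above_tangent[of UNIV \<psi> 0 1 "f' (y - x)"] by simp
  thus ?thesis unfolding \<psi>_def by simp
qed

lemma descent_lemma:
  fixes f :: "'a::real_inner \<Rightarrow> real"
  assumes grad: "\<And>z. (f has_derivative (\<lambda>h. inner (gf z) h)) (at z)"
    and lip: "\<And>z w. norm (gf z - gf w) \<le> L * norm (z - w)"
  shows "f y \<le> f x + inner (gf x) (y - x) + L / 2 * norm (y - x) ^ 2"
proof -
  define d where "d = y - x"
  define \<psi> where "\<psi> t = f (x + t *\<^sub>R d) - t * inner (gf x) d - L / 2 * t\<^sup>2 * norm d ^ 2" for t :: real
  have "\<psi> 1 \<le> \<psi> 0"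
  proof (rule DERIV_nonpos_imp_nonincreasing[of 0 1])
    fix t :: real assume t: "0 \<le> t" "t \<le> 1"
    have "((\<lambda>t. x + t *\<^sub>R d) has_derivative (\<lambda>s. s *\<^sub>R d)) (at t)"
      by (auto intro!: derivative_eq_intros)
    from has_derivative_compose[OF this grad]
    have "((\<lambda>t. f (x + t *\<^sub>R d)) has_derivative (\<lambda>s. s * inner (gf (x + t *\<^sub>R d)) d)) (at t)"
      unfolding o_def by simp
    hence "(\<psi> has_derivative
             (\<lambda>s. s * (inner (gf (x + t *\<^sub>R d) - gf x) d - L * t * norm d ^ 2))) (at t)"
      unfolding \<psi>_def
      by (auto intro!: derivative_eq_intros simp: algebra_simps inner_diff_left)
    hence "(\<psi> has_field_derivative inner (gf (x + t *\<^sub>R d) - gf x) d - L * t * norm d ^ 2) (at t)"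
      by (simp add: has_field_derivative_def mult.commute[of _ "_ - _"])
    moreover have "inner (gf (x + t *\<^sub>R d) - gf x) d \<le> L * t * norm d ^ 2"
    proof -
      have "inner (gf (x + t *\<^sub>R d) - gf x) d \<le> norm (gf (x + t *\<^sub>R d) - gf x) * norm d"
        by (rule norm_cauchy_schwarz)
      also have "\<dots> \<le> (L * norm (t *\<^sub>R d)) * norm d"
        using lip[of "x + t *\<^sub>R d" x] by (intro mult_right_mono) auto
      finally show ?thesis using t by (simp add: power2_eq_square mult.assoc)
    qed
    ultimately show "\<exists>y. DERIV \<psi> t :> y \<and> y \<le> 0" by auto
  qed simp
  thus ?thesis unfolding \<psi>_def d_def by simp
qed


lemma limsup_root_less_1_if_geometric_bound:
  fixes u :: "nat \<Rightarrow> real"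
  assumes u: "\<And>k. k \<ge> N \<Longrightarrow> 0 \<le> u k \<and> u k \<le> M * q ^ k" and q: "0 < q" "q < 1"
  shows "limsup (\<lambda>k. ereal (root k (u k))) < 1"
proof -
  define M' where "M' = max M 1"
  have M': "M' > 0" "M \<le> M'" unfolding M'_def by auto
  have "\<forall>\<^sub>F k in sequentially. ereal (root k (u k)) \<le> ereal (root k M' * q)"
    unfolding eventually_sequentially
  proof (intro exI allI impI)
    fix k assume "max N 1 \<le> k"
    hence k: "0 < k" "N \<le> k" by auto
    have "u k \<le> M' * q ^ k" using u[OF k(2)] M' q by (smt (verit) mult_right_mono zero_le_power)
    hence "root k (u k) \<le> root k (M' * q ^ k)" by (rule real_root_le_mono[OF k(1)])
    also have "\<dots> = root k M' * q" using k(1) q by (simp add: real_root_mult real_root_power_cancel)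
    finally show "ereal (root k (u k)) \<le> ereal (root k M' * q)" by simp
  qed
  hence "limsup (\<lambda>k. ereal (root k (u k))) \<le> limsup (\<lambda>k. ereal (root k M' * q))"
    by (rule Limsup_mono)
  also have "\<dots> = ereal q"
  proof -
    have "(\<lambda>k. ereal (root k M' * q)) \<longlonglongrightarrow> ereal (1 * q)"
      by (intro tendsto_intros LIMSEQ_root_const M')
    from lim_imp_Limsup[OF trivial_limit_sequentially this] show ?thesis by simp
  qed
  also have "\<dots> < 1" using q by simp
  finally show ?thesis .
qed

lemma geometric_bound_if_two_step_contraction:
  fixes e :: "nat \<Rightarrow> real"
  assumes nonneg: "\<And>k. 0 \<le> e k" and mono: "\<And>k. e (Suc k) \<le> e k"
    and \<rho>: "0 < \<rho>" "\<rho> < 1" and contr: "\<And>k. k \<ge> N \<Longrightarrow> e (Suc (Suc k)) \<le> \<rho> * e k"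
  shows "\<exists>M q. 0 \<le> M \<and> 0 < q \<and> q < 1 \<and> (\<forall>k\<ge>N. e k \<le> M * q ^ k)"
proof -
  define q where "q = sqrt \<rho>"
  have q: "0 < q" "q < 1" "q\<^sup>2 = \<rho>" unfolding q_def using \<rho> by auto
  have even: "e (N + 2 * i) \<le> \<rho> ^ i * e N" for i
  proof (induction i)
    case (Suc i)
    have "e (N + 2 * Suc i) \<le> \<rho> * e (N + 2 * i)" using contr[of "N + 2 * i"] by simp
    also have "\<dots> \<le> \<rho> ^ Suc i * e N" using Suc \<rho> by (simp add: mult_left_mono)
    finally show ?case .
  qed simp
  define M where "M = e N / q ^ Suc N"
  have "e k \<le> M * q ^ k" if k: "k \<ge> N" for k
  proof -
    define i where "i = (k - N) div 2"
    have "k \<le> N + 2 * i + 1" "N + 2 * i \<le> k" unfolding i_def using k by auto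
    have "e k \<le> e (N + 2 * i)"
      using decseq_SucI[of e] mono \<open>N + 2 * i \<le> k\<close> by (simp add: decseq_def)
    also have "\<dots> \<le> q ^ (2 * i) * e N" using even[of i] q(3) by (simp add: power_mult)
    also have "\<dots> = q ^ (N + 2 * i + 1) * M" unfolding M_def using q by (simp add: power_add)
    also have "\<dots> \<le> q ^ k * M"
      using \<open>k \<le> N + 2 * i + 1\<close> q nonneg[of N] unfolding M_def
      by (intro mult_right_mono power_decreasing) auto
    finally show ?thesis by (simp add: mult.commute)
  qed
  moreover have "0 \<le> M" unfolding M_def using nonneg[of N] q by simp
  ultimately show ?thesis using q by blast
qed

lemma R_linear_limit_if_geometric_increments:
  fixes x :: "nat \<Rightarrow> 'a::banach"
  assumes r: "0 < r" "r < 1" and inc: "\<And>j. j \<ge> N \<Longrightarrow> norm (x (Suc j) - x j) \<le> B * r ^ j"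
  shows "\<exists>l. x \<longlonglongrightarrow> l \<and> (\<forall>k\<ge>N. norm (x k - l) \<le> B / (1 - r) * r ^ k)"
proof -
  define d where "d j = x (Suc j) - x j" for j
  have geom: "summable (\<lambda>j. B * r ^ j)" using r by (intro summable_mult summable_geometric) auto
  have norm_d: "summable (\<lambda>j. norm (d j))"
    by (rule summable_comparison_test'[OF geom, of N]) (simp add: d_def inc)
  hence d: "summable d" by (rule summable_norm_cancel)
  define l where "l = x 0 + suminf d"
  have x_sum: "x k = x 0 + (\<Sum>j<k. d j)" for k
    unfolding d_def by (simp add: sum_lessThan_telescope)
  have "(\<lambda>k. x 0 + (\<Sum>j<k. d j)) \<longlonglongrightarrow> l"
    unfolding l_def by (intro tendsto_add tendsto_const summable_LIMSEQ d)
  hence "x \<longlonglongrightarrow> l" by (simp flip: x_sum)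
  moreover have "norm (x k - l) \<le> B / (1 - r) * r ^ k" if k: "k \<ge> N" for k
  proof -
    have "norm (x k - l) = norm (\<Sum>j. d (j + k))"
      unfolding l_def x_sum[of k] using suminf_minus_initial_segment[OF d, of k]
      by (simp add: norm_minus_commute)
    also have "\<dots> \<le> (\<Sum>j. norm (d (j + k)))"
      by (rule summable_norm) (rule summable_ignore_initial_segment[OF norm_d])
    also have "\<dots> \<le> (\<Sum>j. B * r ^ k * r ^ j)"
    proof (rule suminf_le)
      show "norm (d (j + k)) \<le> B * r ^ k * r ^ j" for j
        using inc[of "j + k"] k unfolding d_def by (simp add: power_add mult_ac)
      show "summable (\<lambda>j. norm (d (j + k)))" by (rule summable_ignore_initial_segment[OF norm_d])
      show "summable (\<lambda>j. B * r ^ k * r ^ j)" using r by (intro summable_mult summable_geometric) auto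
    qed
    also have "\<dots> = B / (1 - r) * r ^ k" using r by (simp add: suminf_mult suminf_geometric)
    finally show ?thesis .
  qed
  ultimately show ?thesis by blast
qed


locale composite =
  fixes f :: "'a::euclidean_space \<Rightarrow> real" and gf :: "'a \<Rightarrow> 'a"
    and g :: "'a \<Rightarrow> ereal" and L :: real
  assumes g: "proper_closed_convex g"
    and f_convex: "convex_on UNIV f"
    and f_grad: "\<And>x. (f has_derivative (\<lambda>h. inner (gf x) h)) (at x)"
    and L_pos: "L > 0"
    and f_lip: "\<And>x y. norm (gf x - gf y) \<le> L * norm (x - y)"
begin

definition dom_g :: "'a set" where "dom_g = {z. g z \<noteq> \<infinity>}"

text \<open>\<open>G\<close> is the real-valued version of \<open>g\<close>; it is meaningful only on \<open>dom_g\<close>, since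
  \<open>real_of_ereal \<infinity> = 0\<close>.\<close>
definition G :: "'a \<Rightarrow> real" where "G z = real_of_ereal (g z)"

definition F :: "'a \<Rightarrow> real" where "F z = f z + G z"

lemma g_eq_G: "z \<in> dom_g \<Longrightarrow> g z = ereal (G z)"
  using g unfolding dom_g_def G_def proper_closed_convex_def by (cases "g z") auto

lemma ereal_F: "z \<in> dom_g \<Longrightarrow> ereal (f z) + g z = ereal (F z)"
  by (simp add: g_eq_G F_def)

lemma dom_g_nonempty: "dom_g \<noteq> {}"
  using g unfolding dom_g_def proper_closed_convex_def by auto

lemma G_convex:
  assumes "a \<in> dom_g" "b \<in> dom_g" "0 \<le> t" "t \<le> 1"
  shows "(1 - t) *\<^sub>R a + t *\<^sub>R b \<in> dom_g \<and> G ((1 - t) *\<^sub>R a + t *\<^sub>R b) \<le> (1 - t) * G a + t * G b"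
proof -
  have convex: "convex (epigraph g)" using g unfolding proper_closed_convex_def by auto
  have "(a, G a) \<in> epigraph g" "(b, G b) \<in> epigraph g"
    using assms(1,2) by (auto simp: g_eq_G epigraph_def)
  from convexD[OF convex this, of "1 - t" t]
  have "((1 - t) *\<^sub>R a + t *\<^sub>R b, (1 - t) * G a + t * G b) \<in> epigraph g"
    using assms(3,4) by simp
  hence le: "g ((1 - t) *\<^sub>R a + t *\<^sub>R b) \<le> ereal ((1 - t) * G a + t * G b)"
    unfolding epigraph_def by simp
  hence "(1 - t) *\<^sub>R a + t *\<^sub>R b \<in> dom_g" unfolding dom_g_def by auto
  with le show ?thesis by (simp add: g_eq_G)
qed

lemma G_lsc:
  assumes "\<And>n. z n \<in> dom_g" "z \<longlonglongrightarrow> w" "\<forall>\<^sub>F n in sequentially. G (z n) \<le> c"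
  shows "w \<in> dom_g \<and> G w \<le> c"
proof -
  obtain N where N: "\<And>n. n \<ge> N \<Longrightarrow> G (z n) \<le> c"
    using assms(3) unfolding eventually_sequentially by blast
  have closed: "closed (epigraph g)" using g unfolding proper_closed_convex_def by auto
  have "(z (n + N), c) \<in> epigraph g" for n
    using N[of "n + N"] assms(1) by (simp add: g_eq_G epigraph_def)
  moreover have "(\<lambda>n. (z (n + N), c)) \<longlonglongrightarrow> (w, c)"
    using LIMSEQ_ignore_initial_segment[OF assms(2)] by (intro tendsto_Pair) auto
  ultimately have "(w, c) \<in> epigraph g"
    using closed_sequentially[OF closed, of "\<lambda>n. (z (n + N), c)"] by simp
  hence le: "g w \<le> ereal c" unfolding epigraph_def by simp
  hence "w \<in> dom_g" unfolding dom_g_def by auto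
  with le show ?thesis by (simp add: g_eq_G)
qed

lemma G_bounded_below_on_cball: "\<exists>M. \<forall>z\<in>dom_g \<inter> cball c r. - M \<le> G z"
proof (rule ccontr)
  assume "\<not> ?thesis"
  hence "\<forall>n::nat. \<exists>z. z \<in> dom_g \<inter> cball c r \<and> G z < - real n" by (meson not_le)
  then obtain z where z: "\<And>n. z n \<in> dom_g \<inter> cball c r" "\<And>n. G (z n) < - real n"
    by metis
  obtain w \<sigma> where "strict_mono \<sigma>" "(z \<circ> \<sigma>) \<longlonglongrightarrow> w"
    using compact_imp_seq_compact[OF compact_cball] z(1) by (metis IntD2 seq_compactE)
  define N where "N = nat \<lceil>- G w + 1\<rceil>"
  have "\<forall>\<^sub>F n in sequentially. G ((z \<circ> \<sigma>) n) \<le> - real N"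
  proof (rule eventually_sequentiallyI)
    fix n assume "N \<le> n"
    with seq_suble[OF \<open>strict_mono \<sigma>\<close>, of n] have "real N \<le> real (\<sigma> n)" by simp
    thus "G ((z \<circ> \<sigma>) n) \<le> - real N" using z(2)[of "\<sigma> n"] by simp
  qed
  with \<open>(z \<circ> \<sigma>) \<longlonglongrightarrow> w\<close> have "G w \<le> - real N"
    using G_lsc[of "z \<circ> \<sigma>"] z(1) by auto
  thus False unfolding N_def by linarith
qed

lemma G_affine_minorant:
  "\<exists>z0 B. z0 \<in> dom_g \<and> 0 \<le> B \<and> (\<forall>z\<in>dom_g. - B - B * norm (z - z0) \<le> G z)"
proof -
  obtain z0 where z0: "z0 \<in> dom_g" using dom_g_nonempty by blast
  obtain M where "\<forall>z\<in>dom_g \<inter> cball z0 1. - M \<le> G z"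
    using G_bounded_below_on_cball by blast
  hence M: "\<And>z. z \<in> dom_g \<Longrightarrow> norm (z - z0) \<le> 1 \<Longrightarrow> - M \<le> G z"
    by (auto simp: dist_norm norm_minus_commute)
  define B where "B = \<bar>M\<bar> + \<bar>G z0\<bar>"
  have "- B - B * norm (z - z0) \<le> G z" if z: "z \<in> dom_g" for z
  proof (cases "norm (z - z0) \<le> 1")
    case True
    thus ?thesis using M[OF z True] unfolding B_def
      by (smt (verit, best) mult_nonneg_nonneg norm_ge_zero)
  next
    case False
    define n where "n = norm (z - z0)"
    have n: "n > 1" using False n_def by simp
    define w where "w = (1 - 1 / n) *\<^sub>R z0 + (1 / n) *\<^sub>R z"
    \<comment> \<open>\<open>w\<close> is the point of the segment from \<open>z0\<close> to \<open>z\<close> at unit distance from \<open>z0\<close>.\<close>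
    have w: "w \<in> dom_g" "G w \<le> (1 - 1 / n) * G z0 + (1 / n) * G z"
      using G_convex[OF z0 z, of "1 / n"] n unfolding w_def by auto
    have "w - z0 = (1 / n) *\<^sub>R (z - z0)" unfolding w_def by (simp add: algebra_simps)
    moreover have "z \<noteq> z0" using n unfolding n_def by auto
    ultimately have "norm (w - z0) = 1" using n unfolding n_def by simp
    hence "- M \<le> (1 - 1 / n) * G z0 + (1 / n) * G z" using M[OF w(1)] w(2) by simp
    hence "- n * M \<le> (n - 1) * G z0 + G z"
      using n by (simp add: field_simps)
    moreover have "- n * \<bar>M\<bar> \<le> - n * M" using n by simp
    moreover have "(n - 1) * G z0 \<le> (n - 1) * \<bar>G z0\<bar>" using n by (intro mult_left_mono) auto
    moreover have "(n - 1) * \<bar>G z0\<bar> \<le> (n + 1) * \<bar>G z0\<bar>" by (intro mult_right_mono) auto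
    ultimately show ?thesis unfolding B_def n_def[symmetric] by (simp add: algebra_simps)
  qed
  moreover have "0 \<le> B" unfolding B_def by simp
  ultimately show ?thesis using z0 by blast
qed


definition prox_obj :: "'a \<Rightarrow> 'a \<Rightarrow> real" where
  "prox_obj v z = G z / L + norm (z - v) ^ 2 / 2"

lemma prox_obj_bounded_below: "bdd_below (prox_obj v ` dom_g)"
proof -
  obtain z0 B where "z0 \<in> dom_g" "0 \<le> B" and B: "\<And>z. z \<in> dom_g \<Longrightarrow> - B - B * norm (z - z0) \<le> G z"
    using G_affine_minorant by blast
  have "- (B + B * norm (v - z0)) / L - (B / L)\<^sup>2 / 2 \<le> prox_obj v z" if z: "z \<in> dom_g" for z
  proof -
    define s where "s = norm (z - v)"
    have "norm (z - z0) \<le> s + norm (v - z0)"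
      unfolding s_def using norm_triangle_ineq[of "z - v" "v - z0"] by simp
    hence "- B - B * (s + norm (v - z0)) \<le> G z"
      using B[OF z] \<open>0 \<le> B\<close> by (smt (verit) mult_left_mono)
    hence "(- B - B * (s + norm (v - z0))) / L \<le> G z / L"
      using L_pos by (simp add: divide_right_mono)
    moreover have "(- B - B * (s + norm (v - z0))) / L = - (B + B * norm (v - z0)) / L - (B / L) * s"
      using L_pos by (simp add: field_simps)
    moreover have "- (B / L)\<^sup>2 / 2 \<le> s\<^sup>2 / 2 - (B / L) * s"
      using zero_le_power2[of "s - B / L"] by (simp add: power2_diff field_simps)
    ultimately show ?thesis unfolding prox_obj_def s_def by linarith
  qed
  thus ?thesis by (intro bdd_belowI2)
qed

lemma prox_obj_midpoint:
  assumes "a \<in> dom_g" "b \<in> dom_g"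
  shows "(1/2) *\<^sub>R a + (1/2) *\<^sub>R b \<in> dom_g \<and>
    prox_obj v ((1/2) *\<^sub>R a + (1/2) *\<^sub>R b) \<le> (prox_obj v a + prox_obj v b) / 2 - norm (a - b) ^ 2 / 8"
proof -
  have "(1/2) *\<^sub>R a + (1/2) *\<^sub>R b \<in> dom_g"
    and G: "G ((1/2) *\<^sub>R a + (1/2) *\<^sub>R b) \<le> (G a + G b) / 2"
    using G_convex[OF assms, of "1/2"] by auto
  moreover have "G ((1/2) *\<^sub>R a + (1/2) *\<^sub>R b) / L \<le> (G a / L + G b / L) / 2"
    using divide_right_mono[OF G, of L] L_pos by (simp add: add_divide_distrib)
  ultimately show ?thesis
    unfolding prox_obj_def norm_midpoint_diff_power2 by argo
qed

lemma prox_obj_lsc: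
  assumes z: "\<And>n. z n \<in> dom_g" "z \<longlonglongrightarrow> w"
    and c: "\<And>n. prox_obj v (z n) \<le> c n" "c \<longlonglongrightarrow> m"
  shows "w \<in> dom_g \<and> prox_obj v w \<le> m"
proof -
  have le: "w \<in> dom_g \<and> prox_obj v w \<le> m + 2 * e" if "e > 0" for e
  proof -
    have "(\<lambda>n. norm (z n - v) ^ 2 / 2) \<longlonglongrightarrow> norm (w - v) ^ 2 / 2"
      by (intro tendsto_intros z) auto
    hence "\<forall>\<^sub>F n in sequentially. norm (w - v) ^ 2 / 2 - e < norm (z n - v) ^ 2 / 2"
      using \<open>e > 0\<close> by (intro order_tendstoD) auto
    moreover have "\<forall>\<^sub>F n in sequentially. c n < m + e"
      using \<open>e > 0\<close> c(2) by (intro order_tendstoD) auto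
    ultimately have "\<forall>\<^sub>F n in sequentially. G (z n) \<le> L * (m + 2 * e - norm (w - v) ^ 2 / 2)"
    proof (rule eventually_mono[OF eventually_conj])
      fix n assume "norm (w - v) ^ 2 / 2 - e < norm (z n - v) ^ 2 / 2 \<and> c n < m + e"
      hence "G (z n) / L \<le> m + 2 * e - norm (w - v) ^ 2 / 2"
        using c(1)[of n] unfolding prox_obj_def by linarith
      thus "G (z n) \<le> L * (m + 2 * e - norm (w - v) ^ 2 / 2)" using L_pos by (simp add: field_simps)
    qed
    from G_lsc[OF z this] show ?thesis unfolding prox_obj_def using L_pos by (simp add: field_simps)
  qed
  have "prox_obj v w \<le> m + e" if "e > 0" for e
    using le[of "e / 2"] that by simp
  with le[of 1] show ?thesis by (auto intro: field_le_epsilon)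
qed


text \<open>A minimising sequence is Cauchy by strong convexity; its limit is a minimiser by lower
  semicontinuity.\<close>
lemma prox_obj_has_minimizer: "\<exists>p\<in>dom_g. \<forall>z\<in>dom_g. prox_obj v p \<le> prox_obj v z"
proof -
  define m where "m = Inf (prox_obj v ` dom_g)"
  define c where "c n = m + inverse (real (Suc n))" for n
  have m_le: "m \<le> prox_obj v z" if "z \<in> dom_g" for z
    unfolding m_def using prox_obj_bounded_below that by (simp add: cInf_lower)
  have "\<exists>z\<in>dom_g. prox_obj v z < c n" for n
    using cInf_lessD[of "prox_obj v ` dom_g" "c n"] dom_g_nonempty
    unfolding c_def m_def by auto
  then obtain z where z: "\<And>n. z n \<in> dom_g" "\<And>n. prox_obj v (z n) < c n" by metis
  have close: "norm (z n - z k) ^ 2 \<le> 4 * (inverse (real (Suc n)) + inverse (real (Suc k)))" for n k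
  proof -
    from prox_obj_midpoint[OF z(1)[of n] z(1)[of k], of v] m_le
    have "m \<le> (prox_obj v (z n) + prox_obj v (z k)) / 2 - norm (z n - z k) ^ 2 / 8" by force
    thus ?thesis using z(2)[of n] z(2)[of k] unfolding c_def by argo
  qed
  have "Cauchy z"
  proof (rule CauchyI)
    fix e :: real assume e: "e > 0"
    obtain N where N: "inverse (real (Suc N)) < e ^ 2 / 8" using reals_Archimedean[of "e ^ 2 / 8"] e by auto
    have "norm (z a - z b) < e" if "N \<le> a" "N \<le> b" for a b
    proof -
      have "inverse (real (Suc a)) \<le> inverse (real (Suc N))" "inverse (real (Suc b)) \<le> inverse (real (Suc N))"
        using that by (simp_all add: le_imp_inverse_le)
      hence "norm (z a - z b) ^ 2 < e ^ 2" using close[of a b] N by argo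
      thus ?thesis using e by (simp add: power_less_imp_less_base)
    qed
    thus "\<exists>M. \<forall>a\<ge>M. \<forall>b\<ge>M. norm (z a - z b) < e" by blast
  qed
  then obtain p where "z \<longlonglongrightarrow> p" using Cauchy_convergent_iff convergent_def by blast
  moreover have "c \<longlonglongrightarrow> m" unfolding c_def by (rule LIMSEQ_inverse_real_of_nat_add)
  ultimately have "p \<in> dom_g \<and> prox_obj v p \<le> m"
    using prox_obj_lsc[of z p v c m] z by (auto intro: less_imp_le)
  with m_le show ?thesis by (auto intro: order_trans)
qed

abbreviation g_scaled :: "'a \<Rightarrow> ereal" where "g_scaled \<equiv> \<lambda>z. ereal (1 / L) * g z"

lemma g_scaled_add_dist:
  "g_scaled z + ereal (norm (z - v) ^ 2 / 2) = (if z \<in> dom_g then ereal (prox_obj v z) else \<infinity>)"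
proof (cases "z \<in> dom_g")
  case True thus ?thesis by (simp add: g_eq_G prox_obj_def)
next
  case False thus ?thesis using L_pos by (simp add: dom_g_def)
qed

lemma prox_g_scaled_minimizes:
  "prox g_scaled v \<in> dom_g \<and> (\<forall>z\<in>dom_g. prox_obj v (prox g_scaled v) \<le> prox_obj v z)"
proof -
  define \<Phi> where "\<Phi> z = (if z \<in> dom_g then ereal (prox_obj v z) else \<infinity>)" for z
  obtain p where p: "p \<in> dom_g" "\<forall>z\<in>dom_g. prox_obj v p \<le> prox_obj v z"
    using prox_obj_has_minimizer by blast
  hence "\<forall>z. \<Phi> p \<le> \<Phi> z" unfolding \<Phi>_def by simp
  hence "\<forall>z. \<Phi> (prox g_scaled v) \<le> \<Phi> z"
    unfolding prox_def g_scaled_add_dist \<Phi>_def[symmetric] by (rule someI)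
  hence le: "\<Phi> (prox g_scaled v) \<le> \<Phi> z" for z by blast
  have dom: "prox g_scaled v \<in> dom_g" using le[of p] p(1) unfolding \<Phi>_def by (auto split: if_splits)
  moreover have "prox_obj v (prox g_scaled v) \<le> prox_obj v z" if "z \<in> dom_g" for z
    using le[of z] that dom unfolding \<Phi>_def by simp
  ultimately show ?thesis by blast
qed
lemma prox_g_scaled_variational_ineq:
  assumes z: "z \<in> dom_g"
  shows "G (prox g_scaled v) / L + inner (v - prox g_scaled v) (z - prox g_scaled v) \<le> G z / L"
proof -
  define p where "p = prox g_scaled v"
  have p: "p \<in> dom_g" "\<And>z. z \<in> dom_g \<Longrightarrow> prox_obj v p \<le> prox_obj v z"
    using prox_g_scaled_minimizes unfolding p_def by auto
  define A where "A = G z / L - G p / L - inner (v - p) (z - p)"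
  have "0 \<le> A + t * (norm (z - p) ^ 2 / 2)" if t: "0 < t" "t \<le> 1" for t
  proof -
    define zt where "zt = (1 - t) *\<^sub>R p + t *\<^sub>R z"
    have zt: "zt \<in> dom_g" "G zt \<le> (1 - t) * G p + t * G z"
      using G_convex[OF p(1) z] t unfolding zt_def by auto
    have zt_v: "zt - v = (p - v) + t *\<^sub>R (z - p)" unfolding zt_def by (simp add: algebra_simps)
    have "norm (zt - v) ^ 2 = norm (p - v) ^ 2 + 2 * t * inner (p - v) (z - p) + t ^ 2 * norm (z - p) ^ 2"
      unfolding zt_v by (rule norm_add_scaleR_power2)
    moreover have "G zt / L \<le> ((1 - t) * G p + t * G z) / L"
      using zt(2) L_pos by (simp add: divide_right_mono)
    moreover have "prox_obj v p \<le> prox_obj v zt" using p(2)[OF zt(1)] .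
    ultimately have "0 \<le> ((1 - t) * G p + t * G z) / L - G p / L
                        + t * inner (p - v) (z - p) + t ^ 2 * norm (z - p) ^ 2 / 2"
      unfolding prox_obj_def by argo
    also have "\<dots> = t * (A + t * (norm (z - p) ^ 2 / 2))"
      unfolding A_def using L_pos
      by (simp add: field_simps inner_diff_left inner_diff_right power2_eq_square)
    finally show ?thesis using t by (simp add: zero_le_mult_iff)
  qed
  hence "0 \<le> A" by (rule nonneg_if_nonneg_add_small_multiple)
  thus ?thesis unfolding A_def p_def by simp
qed

definition T :: "'a \<Rightarrow> 'a" where "T u = prox g_scaled (u - (1 / L) *\<^sub>R gf u)"

lemma T_in_dom: "T u \<in> dom_g"
  unfolding T_def using prox_g_scaled_minimizes by blast

text \<open>The basic inequality of forward-backward splitting: the descent lemma at \<open>y\<close> and the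
  gradient inequality towards \<open>z\<close>, added to the optimality condition of the prox step.\<close>
lemma T_sufficient_decrease:
  assumes z: "z \<in> dom_g"
  shows "L / 2 * norm (T y - y) ^ 2 + L * inner (y - z) (T y - y) \<le> F z - F (T y)"
proof -
  define p where "p = T y"
  have "G p / L + inner (y - (1 / L) *\<^sub>R gf y - p) (z - p) \<le> G z / L"
    using prox_g_scaled_variational_ineq[OF z] unfolding p_def T_def .
  hence "L * (G p / L + inner (y - (1 / L) *\<^sub>R gf y - p) (z - p)) \<le> L * (G z / L)"
    using L_pos by (intro mult_left_mono) auto
  hence prox: "G p + L * inner (y - p) (z - p) - inner (gf y) (z - p) \<le> G z"
    using L_pos by (simp add: inner_diff_left algebra_simps)
  have "f p \<le> f y + inner (gf y) (p - y) + L / 2 * norm (p - y) ^ 2"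
    using descent_lemma[OF f_grad f_lip] .
  moreover have "f y + inner (gf y) (z - y) \<le> f z"
    using convex_on_gradient_ineq[OF f_convex f_grad] .
  moreover have "inner (gf y) (z - y) = inner (gf y) (p - y) + inner (gf y) (z - p)"
    by (simp add: inner_diff_right)
  moreover have "inner (y - p) (z - p) = inner (y - z) (p - y) + norm (p - y) ^ 2"
    unfolding power2_norm_eq_inner by (simp add: inner_diff_left inner_diff_right inner_commute)
  hence "L * inner (y - p) (z - p) = L * inner (y - z) (p - y) + L * norm (p - y) ^ 2"
    by (simp add: distrib_left)
  moreover have "L / 2 * norm (p - y) ^ 2 = (L * norm (p - y) ^ 2) / 2" by simp
  moreover have "norm (T y - y) = norm (p - y)" unfolding p_def ..
  ultimately show ?thesis using prox unfolding p_def[symmetric] F_def by linarith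
qed

lemma T_lipschitz: "norm (T u - T w) \<le> 2 * norm (u - w)"
proof -
  define v1 v2 where "v1 = u - (1 / L) *\<^sub>R gf u" "v2 = w - (1 / L) *\<^sub>R gf w"
  define p1 p2 where "p1 = T u" "p2 = T w"
  have "G p1 / L + inner (v1 - p1) (p2 - p1) \<le> G p2 / L"
    using prox_g_scaled_variational_ineq[OF T_in_dom[of w], of v1] unfolding p1_p2_def T_def v1_v2_def .
  moreover have "G p2 / L + inner (v2 - p2) (p1 - p2) \<le> G p1 / L"
    using prox_g_scaled_variational_ineq[OF T_in_dom[of u], of v2] unfolding p1_p2_def T_def v1_v2_def .
  moreover have "inner (v1 - p1) (p2 - p1) + inner (v2 - p2) (p1 - p2)
                   = norm (p1 - p2) ^ 2 - inner (v1 - v2) (p1 - p2)"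
    unfolding power2_norm_eq_inner by (simp add: inner_diff_left inner_diff_right inner_commute)
  ultimately have "norm (p1 - p2) ^ 2 \<le> inner (v1 - v2) (p1 - p2)" by argo
  also have "\<dots> \<le> norm (v1 - v2) * norm (p1 - p2)" by (rule norm_cauchy_schwarz)
  finally have "norm (p1 - p2) \<le> norm (v1 - v2)"
    by (cases "norm (p1 - p2) = 0") (auto simp: power2_eq_square)
  also have "norm (v1 - v2) \<le> norm (u - w) + norm ((1 / L) *\<^sub>R (gf u - gf w))"
    using norm_triangle_ineq4[of "u - w" "(1 / L) *\<^sub>R (gf u - gf w)"]
    unfolding v1_v2_def by (simp add: algebra_simps)
  also have "norm ((1 / L) *\<^sub>R (gf u - gf w)) \<le> norm (u - w)"
  proof -
    have "norm ((1 / L) *\<^sub>R (gf u - gf w)) = norm (gf u - gf w) / L" using L_pos by simp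
    also have "\<dots> \<le> norm (u - w)" using f_lip[of u w] L_pos by (simp add: divide_le_eq mult.commute)
    finally show ?thesis .
  qed
  finally show ?thesis unfolding p1_p2_def by simp
qed

definition X :: "'a set" where "X = {z. - gf z \<in> subdiff g z}"

lemma X_imp_minimizer:
  assumes "z \<in> X" "y \<in> dom_g"
  shows "z \<in> dom_g" "F z \<le> F y"
proof -
  from assms(1) have z: "z \<in> dom_g" and sub: "g z + ereal (inner (- gf z) (y - z)) \<le> g y"
    unfolding X_def subdiff_def dom_g_def by auto
  show "z \<in> dom_g" by (rule z)
  have "G z - inner (gf z) (y - z) \<le> G y" using sub g_eq_G[OF z] g_eq_G[OF assms(2)] by simp
  moreover have "f z + inner (gf z) (y - z) \<le> f y"
    using convex_on_gradient_ineq[OF f_convex f_grad] .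
  ultimately show "F z \<le> F y" unfolding F_def by simp
qed

lemma minimizer_imp_X:
  assumes z: "z \<in> dom_g" and min: "\<And>y. y \<in> dom_g \<Longrightarrow> F z \<le> F y"
  shows "z \<in> X"
  unfolding X_def subdiff_def
proof (intro CollectI conjI allI)
  show "g z \<noteq> \<infinity>" using z unfolding dom_g_def by simp
  fix y
  show "g z + ereal (inner (- gf z) (y - z)) \<le> g y"
  proof (cases "y \<in> dom_g")
    case False thus ?thesis unfolding dom_g_def by simp
  next
    case y: True
    define A where "A = inner (gf z) (y - z) + G y - G z"
    have "0 \<le> A + t * (L / 2 * norm (y - z) ^ 2)" if t: "0 < t" "t \<le> 1" for t
    proof -
      define zt where "zt = (1 - t) *\<^sub>R z + t *\<^sub>R y"
      have zt: "zt \<in> dom_g" "G zt \<le> (1 - t) * G z + t * G y"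
        using G_convex[OF z y] t unfolding zt_def by auto
      have "zt - z = t *\<^sub>R (y - z)" unfolding zt_def by (simp add: algebra_simps)
      hence "norm (zt - z) = t * norm (y - z)" "inner (gf z) (zt - z) = t * inner (gf z) (y - z)"
        using t by simp_all
      hence "f zt \<le> f z + t * inner (gf z) (y - z) + t ^ 2 * (L / 2 * norm (y - z) ^ 2)"
        using descent_lemma[OF f_grad f_lip, of zt z] by (simp add: power_mult_distrib algebra_simps)
      hence "0 \<le> t * A + t ^ 2 * (L / 2 * norm (y - z) ^ 2)"
        using min[OF zt(1)] zt(2) unfolding A_def F_def by (simp add: algebra_simps)
      also have "\<dots> = t * (A + t * (L / 2 * norm (y - z) ^ 2))"
        by (simp add: algebra_simps power2_eq_square)
      finally show ?thesis using t by (simp add: zero_le_mult_iff)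
    qed
    hence "0 \<le> A" by (rule nonneg_if_nonneg_add_small_multiple)
    thus ?thesis using g_eq_G[OF z] g_eq_G[OF y] unfolding A_def by simp
  qed
qed

end


locale composite_min = composite +
  fixes xm :: 'a
  assumes xm_min: "\<And>x. ereal (f xm) + g xm \<le> ereal (f x) + g x"
begin

lemma xm_in_dom: "xm \<in> dom_g"
proof -
  obtain z where "z \<in> dom_g" using dom_g_nonempty by blast
  thus ?thesis using xm_min[of z] unfolding dom_g_def by (cases "g xm") auto
qed

definition Fmin :: real where "Fmin = F xm"

lemma Fmin_le: "z \<in> dom_g \<Longrightarrow> Fmin \<le> F z"
  using xm_min[of z] unfolding Fmin_def by (simp add: ereal_F xm_in_dom)

lemma INF_eq_Fmin: "(INF x. ereal (f x) + g x) = ereal Fmin"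
proof (rule antisym)
  have "(INF x. ereal (f x) + g x) \<le> ereal (f xm) + g xm" by (rule INF_lower) simp
  thus "(INF x. ereal (f x) + g x) \<le> ereal Fmin" unfolding Fmin_def by (simp add: ereal_F xm_in_dom)
  show "ereal Fmin \<le> (INF x. ereal (f x) + g x)"
    unfolding Fmin_def using xm_min by (simp add: INF_greatest ereal_F[OF xm_in_dom, symmetric])
qed

lemma X_iff: "z \<in> X \<longleftrightarrow> z \<in> dom_g \<and> F z = Fmin"
  using X_imp_minimizer[of z xm] Fmin_le minimizer_imp_X[of z] xm_in_dom
  unfolding Fmin_def by (auto intro: antisym)

lemma xm_in_X: "xm \<in> X"
  using X_iff xm_in_dom Fmin_def by simp

lemma X_minimal: "z \<in> X \<Longrightarrow> ereal (f z) + g z \<le> ereal (f x) + g x"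
  using X_iff[of z] xm_min[of x] ereal_F[of z] ereal_F[of xm] xm_in_dom
  unfolding Fmin_def by simp

lemma closed_X: "closed X"
  unfolding closed_sequential_limits
proof (intro allI impI)
  fix z w assume "(\<forall>n. z n \<in> X) \<and> z \<longlonglongrightarrow> w"
  hence z: "\<And>n. z n \<in> dom_g" "\<And>n. F (z n) = Fmin" and w: "z \<longlonglongrightarrow> w"
    using X_iff by auto
  have f: "(\<lambda>n. f (z n)) \<longlonglongrightarrow> f w"
    using has_derivative_continuous[OF f_grad] w by (rule isCont_tendsto_compose)
  have le: "w \<in> dom_g \<and> G w \<le> Fmin - f w + e" if "e > 0" for e
  proof (rule G_lsc[OF z(1) w])
    have "\<forall>\<^sub>F n in sequentially. f w - e < f (z n)"
      using order_tendstoD(1)[OF f, of "f w - e"] \<open>e > 0\<close> by simp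
    thus "\<forall>\<^sub>F n in sequentially. G (z n) \<le> Fmin - f w + e"
    proof (rule eventually_mono)
      fix n assume "f w - e < f (z n)"
      thus "G (z n) \<le> Fmin - f w + e" using z(2)[of n] unfolding F_def by linarith
    qed
  qed
  have "F w \<le> Fmin + e" if "e > 0" for e using le[OF that] unfolding F_def by simp
  hence "F w \<le> Fmin" by (rule field_le_epsilon)
  with le[of 1] Fmin_le show "w \<in> X" unfolding X_iff by force
qed

end

lemma fista_theta_update_bounds:
  fixes t :: real assumes "1 \<le> t"
  shows "t \<le> (1 + sqrt (1 + 4 * t\<^sup>2)) / 2" "(1 + sqrt (1 + 4 * t\<^sup>2)) / 2 \<le> 1 + t"
proof -
  have "2 * t \<le> sqrt (1 + 4 * t\<^sup>2)"
    using assms by (intro real_le_rsqrt) (simp add: power2_eq_square)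
  thus "t \<le> (1 + sqrt (1 + 4 * t\<^sup>2)) / 2" by simp
  have "sqrt (1 + 4 * t\<^sup>2) \<le> sqrt ((1 + 2 * t)\<^sup>2)"
    using assms by (intro real_sqrt_le_mono) (simp add: power2_eq_square algebra_simps)
  thus "(1 + sqrt (1 + 4 * t\<^sup>2)) / 2 \<le> 1 + t" using assms by simp
qed

locale fista = composite +
  fixes K :: nat and adaptive :: bool and x0 :: 'a
  assumes K_pos: "K > 0" and x0_dom: "g x0 \<noteq> \<infinity>"
begin

definition state where "state k = fista_state L gf g K adaptive x0 k"
definition xk where "xk k = fst (snd (state k))"
definition xk_prev where "xk_prev k = fst (state k)"
definition theta_prev where "theta_prev k = fst (snd (snd (state k)))"
definition theta where "theta k = snd (snd (snd (state k)))"

text \<open>The parameters actually used in iteration \<open>k\<close>, after the fixed restart test.\<close>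
definition theta_prev_used where "theta_prev_used k = (if K dvd k then 1 else theta_prev k)"
definition theta_used where "theta_used k = (if K dvd k then 1 else theta k)"
definition beta where "beta k = (theta_prev_used k - 1) / theta_used k"
definition yk where "yk k = xk k + beta k *\<^sub>R (xk k - xk_prev k)"

lemma fista_x_eq_xk: "fista_x L gf g K adaptive x0 k = xk k"
  unfolding fista_x_def xk_def state_def ..

lemma state_0: "xk 0 = x0" "xk_prev 0 = x0" "theta_prev 0 = 1" "theta 0 = 1"
  unfolding xk_def xk_prev_def theta_prev_def theta_def state_def by simp_all

lemma state_Suc:
  "xk_prev (Suc k) = xk k \<and> xk (Suc k) = T (yk k) \<and>
   (theta_prev (Suc k) = 1 \<and> theta (Suc k) = 1 \<or>
    theta_prev (Suc k) = theta_used k \<and> theta (Suc k) = (1 + sqrt (1 + 4 * (theta_used k)\<^sup>2)) / 2)"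
proof -
  obtain a b c d where "fista_state L gf g K adaptive x0 k = (a, b, c, d)"
    by (cases "fista_state L gf g K adaptive x0 k") auto
  thus ?thesis
    unfolding yk_def beta_def theta_prev_used_def theta_used_def xk_def xk_prev_def
      theta_prev_def theta_def state_def
    by (cases adaptive) (simp_all add: Let_def T_def[symmetric])
qed

lemma xk_in_dom: "xk k \<in> dom_g"
  by (cases k) (use state_0 x0_dom state_Suc T_in_dom in \<open>auto simp: dom_g_def\<close>)

text \<open>Without restarts \<open>\<theta>\<^sub>k\<close> grows like \<open>k/2\<close> and \<open>\<beta>\<^sub>k \<rightarrow> 1\<close>; the fixed restart keeps
  \<open>\<theta>\<^sub>k \<le> K\<close>, hence \<open>\<beta>\<^sub>k \<le> 1 - 1/K\<close>.\<close>
lemma theta_invariant: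
  "1 \<le> theta_prev k \<and> theta_prev k \<le> theta k \<and> (\<not> K dvd k \<longrightarrow> theta k \<le> 1 + real (k mod K))"
proof (induction k)
  case 0 thus ?case using state_0 by simp
next
  case (Suc k)
  have used: "1 \<le> theta_prev_used k" "theta_prev_used k \<le> theta_used k"
    "theta_used k \<le> 1 + real (k mod K)"
    using Suc unfolding theta_prev_used_def theta_used_def by auto
  have "\<not> K dvd Suc k \<Longrightarrow> Suc k mod K = Suc (k mod K)"
    by (metis dvd_eq_mod_eq_0 mod_Suc)
  with state_Suc[of k] used fista_theta_update_bounds[of "theta_used k"] show ?case by auto
qed

definition beta_max :: real where "beta_max = 1 - 1 / real K"

lemma beta_bounds: "0 \<le> beta k" "beta k \<le> beta_max"
proof -
  have used: "1 \<le> theta_prev_used k" "theta_prev_used k \<le> theta_used k"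
    "theta_used k \<le> real K"
    using theta_invariant[of k] K_pos unfolding theta_prev_used_def theta_used_def
    by (auto dest: mod_less_divisor[of K k])
  show "0 \<le> beta k" unfolding beta_def using used by simp
  have "beta k \<le> (theta_used k - 1) / theta_used k"
    unfolding beta_def using used by (simp add: divide_right_mono)
  also have "\<dots> = 1 - 1 / theta_used k" using used by (simp add: field_simps)
  also have "\<dots> \<le> beta_max" unfolding beta_max_def using used by (simp add: frac_le)
  finally show "beta k \<le> beta_max" .
qed

lemma beta_max_less_1: "beta_max < 1"
  unfolding beta_max_def using K_pos by simp

end


locale fista_opt = fista f gf g L K adaptive x0 + composite_min f gf g L xm
  for f :: "'a::euclidean_space \<Rightarrow> real" and gf g L K adaptive x0 xm
begin

definition step_len :: "nat \<Rightarrow> real" where "step_len k = norm (xk k - xk_prev k)"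

definition energy :: "nat \<Rightarrow> real" where
  "energy k = F (xk k) - Fmin + L / 2 * step_len k ^ 2"

lemma step_len_nonneg: "0 \<le> step_len k"
  unfolding step_len_def by simp

lemma step_len_Suc: "step_len (Suc k) = norm (xk (Suc k) - xk k)"
  unfolding step_len_def using state_Suc by simp

lemma norm_yk_diff: "norm (yk k - xk k) = beta k * step_len k"
  unfolding yk_def step_len_def using beta_bounds(1)[of k] by simp

lemma norm_yk_diff_le: "norm (yk k - xk k) \<le> step_len k"
  unfolding norm_yk_diff using beta_bounds[of k] beta_max_less_1 step_len_nonneg[of k]
  by (simp add: mult_left_le_one_le)

lemma energy_nonneg: "0 \<le> energy k"
  unfolding energy_def using Fmin_le[OF xk_in_dom[of k]] L_pos by simp

text \<open>Sufficient decrease with \<open>z = x\<^sub>k\<close>; the inner product term is rewritten by the polarisation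
  identity \<open>\<parallel>p - y\<parallel>\<^sup>2 + 2\<langle>y - z, p - y\<rangle> = \<parallel>p - z\<parallel>\<^sup>2 - \<parallel>y - z\<parallel>\<^sup>2\<close>.\<close>
lemma F_step:
  "F (xk (Suc k)) + L / 2 * step_len (Suc k) ^ 2 \<le> F (xk k) + L / 2 * (beta k * step_len k) ^ 2"
proof -
  define p y z where "p = xk (Suc k)" "y = yk k" "z = xk k"
  have "L / 2 * norm (p - y) ^ 2 + L * inner (y - z) (p - y) \<le> F z - F p"
    using T_sufficient_decrease[OF xk_in_dom[of k], of y] state_Suc unfolding p_y_z_def by simp
  moreover have "norm (p - y) ^ 2 + 2 * inner (y - z) (p - y) = norm (p - z) ^ 2 - norm (y - z) ^ 2"
    unfolding power2_norm_eq_inner by (simp add: inner_diff_left inner_diff_right inner_commute)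
  hence "L / 2 * (norm (p - y) ^ 2 + 2 * inner (y - z) (p - y)) = L / 2 * (norm (p - z) ^ 2 - norm (y - z) ^ 2)"
    by simp
  hence "L / 2 * norm (p - y) ^ 2 + L * inner (y - z) (p - y) = L / 2 * norm (p - z) ^ 2 - L / 2 * norm (y - z) ^ 2"
    by (simp add: algebra_simps)
  moreover have "norm (p - z) = step_len (Suc k)" "norm (y - z) = beta k * step_len k"
    unfolding p_y_z_def step_len_Suc norm_yk_diff by simp_all
  ultimately show ?thesis unfolding p_y_z_def by simp
qed

definition c_dec :: real where "c_dec = L / 2 * (1 - beta_max ^ 2)"

lemma c_dec_pos: "c_dec > 0"
proof -
  have "0 \<le> beta_max" unfolding beta_max_def using K_pos by (simp add: field_simps)
  hence "beta_max ^ 2 < 1" using beta_max_less_1 by (simp add: power_less_one_iff)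
  thus ?thesis unfolding c_dec_def using L_pos by simp
qed

lemma energy_decrease: "energy (Suc k) + c_dec * step_len k ^ 2 \<le> energy k"
proof -
  have "(beta k * step_len k) ^ 2 \<le> (beta_max * step_len k) ^ 2"
    using beta_bounds[of k] step_len_nonneg[of k] by (intro power_mono mult_right_mono) auto
  hence "L / 2 * (beta k * step_len k) ^ 2 \<le> L / 2 * step_len k ^ 2 - c_dec * step_len k ^ 2"
    unfolding c_dec_def using L_pos by (simp add: power_mult_distrib algebra_simps)
  thus ?thesis using F_step[of k] unfolding energy_def by linarith
qed

lemma energy_Suc_le: "energy (Suc k) \<le> energy k"
  using energy_decrease[of k] c_dec_pos by (smt (verit) mult_nonneg_nonneg zero_le_power2)

lemma F_xk_le_F_x0: "F (xk k) \<le> F x0"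
proof -
  have "decseq energy" using energy_Suc_le by (simp add: decseq_SucI)
  hence "energy k \<le> energy 0" by (simp add: decseq_def)
  moreover have "energy 0 = F x0 - Fmin" unfolding energy_def step_len_def using state_0 by simp
  moreover have "0 \<le> L / 2 * step_len k ^ 2" using L_pos by simp
  ultimately show ?thesis unfolding energy_def by linarith
qed

lemma step_len_tendsto_0: "step_len \<longlonglongrightarrow> 0"
proof -
  have "decseq energy" using energy_Suc_le by (simp add: decseq_SucI)
  then obtain l where l: "energy \<longlonglongrightarrow> l"
    using decseq_convergent[of energy 0] energy_nonneg by blast
  have "(\<lambda>k. (energy k - energy (Suc k)) / c_dec) \<longlonglongrightarrow> (l - l) / c_dec"
    by (intro tendsto_intros l LIMSEQ_Suc) (use c_dec_pos in simp)
  hence lim: "(\<lambda>k. (energy k - energy (Suc k)) / c_dec) \<longlonglongrightarrow> 0" by simp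
  have "(\<lambda>k. step_len k ^ 2) \<longlonglongrightarrow> 0"
  proof (rule tendsto_sandwich[OF _ _ tendsto_const lim])
    show "\<forall>\<^sub>F k in sequentially. 0 \<le> step_len k ^ 2" by simp
    show "\<forall>\<^sub>F k in sequentially. step_len k ^ 2 \<le> (energy k - energy (Suc k)) / c_dec"
      using energy_decrease c_dec_pos by (simp add: field_simps)
  qed
  hence "(\<lambda>k. sqrt (step_len k ^ 2)) \<longlonglongrightarrow> sqrt 0" by (rule tendsto_real_sqrt)
  thus ?thesis using step_len_nonneg by simp
qed

lemma T_residual_le: "norm (T (xk k) - xk k) \<le> 2 * step_len k + step_len (Suc k)"
proof -
  have "norm (T (xk k) - xk k) \<le> norm (T (xk k) - T (yk k)) + norm (T (yk k) - xk k)"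
    using norm_triangle_ineq[of "T (xk k) - T (yk k)" "T (yk k) - xk k"] by simp
  also have "norm (T (xk k) - T (yk k)) \<le> 2 * norm (xk k - yk k)" by (rule T_lipschitz)
  also have "norm (xk k - yk k) \<le> step_len k"
    using norm_yk_diff_le[of k] by (simp add: norm_minus_commute)
  also have "T (yk k) = xk (Suc k)" using state_Suc by simp
  finally show ?thesis by (simp add: step_len_Suc)
qed

text \<open>Sufficient decrease with \<open>z\<close> a point of \<open>X\<close> nearest to \<open>x\<^sub>k\<close>.\<close>
lemma energy_le_step_lens:
  assumes \<tau>: "0 < \<tau>" and dist: "infdist (xk k) X \<le> \<tau> * (2 * step_len k + step_len (Suc k))"
  shows "energy (Suc k) \<le> (2 * L * (1 + 2 * \<tau>) + L) * (step_len k ^ 2 + step_len (Suc k) ^ 2)"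
proof -
  define a b where "a = step_len k" "b = step_len (Suc k)"
  have a: "0 \<le> a" and b: "0 \<le> b" unfolding a_b_def by (simp_all add: step_len_nonneg)
  obtain xb where xb: "xb \<in> X" "infdist (xk k) X = dist (xk k) xb"
    using infdist_attains_inf[OF closed_X] xm_in_X by blast
  define p y x where "p = xk (Suc k)" "y = yk k" "x = xk k"
  have "norm (y - xb) \<le> norm (y - x) + norm (x - xb)"
    using norm_triangle_ineq[of "y - x" "x - xb"] by simp
  also have "\<dots> \<le> a + \<tau> * (2 * a + b)"
    using norm_yk_diff_le[of k] dist xb(2) unfolding p_y_x_def a_b_def by (simp add: dist_norm)
  also have "\<dots> \<le> (1 + 2 * \<tau>) * (a + b)" using a b \<tau> by (simp add: algebra_simps)
  finally have yxb: "norm (y - xb) \<le> (1 + 2 * \<tau>) * (a + b)" .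
  have "norm (p - y) \<le> norm (p - x) + norm (x - y)"
    using norm_triangle_ineq[of "p - x" "x - y"] by simp
  hence py: "norm (p - y) \<le> a + b"
    using norm_yk_diff_le[of k] unfolding p_y_x_def a_b_def step_len_Suc
    by (simp add: norm_minus_commute)
  have "L / 2 * norm (p - y) ^ 2 + L * inner (y - xb) (p - y) \<le> Fmin - F p"
    using T_sufficient_decrease[of xb y] X_iff[of xb] xb(1) state_Suc unfolding p_y_x_def by simp
  moreover have "0 \<le> L / 2 * norm (p - y) ^ 2" using L_pos by simp
  moreover have "- (L * inner (y - xb) (p - y)) = L * inner (xb - y) (p - y)"
    by (simp add: inner_diff_left algebra_simps)
  ultimately have "F p - Fmin \<le> L * inner (xb - y) (p - y)" by linarith
  also have "\<dots> \<le> L * (norm (y - xb) * norm (p - y))"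
    using norm_cauchy_schwarz[of "xb - y" "p - y"] L_pos
    by (simp add: norm_minus_commute mult_left_mono)
  also have "\<dots> \<le> L * ((1 + 2 * \<tau>) * (a + b) * (a + b))"
    using yxb py L_pos \<tau> a b by (intro mult_left_mono mult_mono) auto
  also have "\<dots> \<le> L * ((1 + 2 * \<tau>) * (2 * (a ^ 2 + b ^ 2)))"
  proof -
    have "(a + b) * (a + b) \<le> 2 * (a ^ 2 + b ^ 2)"
      using sum_squares_bound[of a b] by (simp add: power2_eq_square algebra_simps)
    thus ?thesis using L_pos \<tau> by (intro mult_left_mono) (auto simp: mult.assoc)
  qed
  finally have "F p - Fmin \<le> 2 * L * (1 + 2 * \<tau>) * (a ^ 2 + b ^ 2)" by (simp add: algebra_simps)
  moreover have "L / 2 * b ^ 2 \<le> L * (a ^ 2 + b ^ 2)" using L_pos by (simp add: mult_left_mono)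
  ultimately show ?thesis unfolding energy_def a_b_def p_y_x_def by (simp add: algebra_simps)
qed

lemma energy_two_step_contraction:
  assumes "0 < C" "energy (Suc k) \<le> C * (step_len k ^ 2 + step_len (Suc k) ^ 2)"
  shows "energy (Suc (Suc k)) \<le> C / (c_dec + C) * energy k"
proof -
  have "c_dec * energy (Suc k) \<le> C * (c_dec * step_len k ^ 2 + c_dec * step_len (Suc k) ^ 2)"
    using mult_left_mono[OF assms(2), of c_dec] c_dec_pos by (simp add: algebra_simps)
  also have "\<dots> \<le> C * ((energy k - energy (Suc k)) + (energy (Suc k) - energy (Suc (Suc k))))"
    using energy_decrease[of k] energy_decrease[of "Suc k"] assms(1)
    by (intro mult_left_mono add_mono) auto
  finally have "c_dec * energy (Suc k) \<le> C * (energy k - energy (Suc (Suc k)))" by simp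
  moreover have "c_dec * energy (Suc (Suc k)) \<le> c_dec * energy (Suc k)"
    using energy_Suc_le c_dec_pos by (intro mult_left_mono) auto
  ultimately have "(c_dec + C) * energy (Suc (Suc k)) \<le> C * energy k" by (simp add: algebra_simps)
  thus ?thesis using c_dec_pos assms(1) by (simp add: field_simps)
qed

end


locale fista_eb = fista_opt +
  assumes error_bound: "\<exists>\<epsilon>>0. \<exists>\<tau>>0. \<forall>x. norm (T x - x) < \<epsilon> \<and> ereal (f x) + g x \<le> ereal (F x0)
                           \<longrightarrow> infdist x X \<le> \<tau> * norm (T x - x)"
begin

lemma eventually_error_bound:
  "\<exists>\<tau>>0. \<exists>N. \<forall>k\<ge>N. infdist (xk k) X \<le> \<tau> * (2 * step_len k + step_len (Suc k))"
proof -
  obtain \<epsilon> \<tau> where "\<epsilon> > 0" "\<tau> > 0"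
    and eb: "\<And>x. norm (T x - x) < \<epsilon> \<Longrightarrow> ereal (f x) + g x \<le> ereal (F x0)
               \<Longrightarrow> infdist x X \<le> \<tau> * norm (T x - x)"
    using error_bound by blast
  have "(\<lambda>k. 2 * step_len k + step_len (Suc k)) \<longlonglongrightarrow> 2 * 0 + 0"
    by (intro tendsto_intros step_len_tendsto_0 LIMSEQ_Suc)
  then obtain N where N: "\<And>k. k \<ge> N \<Longrightarrow> 2 * step_len k + step_len (Suc k) < \<epsilon>"
    using order_tendstoD(2)[of _ 0 sequentially \<epsilon>] \<open>\<epsilon> > 0\<close> by (auto simp: eventually_sequentially)
  have "infdist (xk k) X \<le> \<tau> * (2 * step_len k + step_len (Suc k))" if "k \<ge> N" for k
  proof -
    have "infdist (xk k) X \<le> \<tau> * norm (T (xk k) - xk k)"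
      using eb N[OF that] T_residual_le[of k] F_xk_le_F_x0[of k] ereal_F[OF xk_in_dom[of k]] by force
    also have "\<dots> \<le> \<tau> * (2 * step_len k + step_len (Suc k))"
      using T_residual_le[of k] \<open>\<tau> > 0\<close> by (intro mult_left_mono) auto
    finally show ?thesis .
  qed
  with \<open>\<tau> > 0\<close> show ?thesis by blast
qed

lemma energy_R_linear: "\<exists>M q N. 0 \<le> M \<and> 0 < q \<and> q < 1 \<and> (\<forall>k\<ge>N. energy k \<le> M * q ^ k)"
proof -
  obtain \<tau> N where "\<tau> > 0"
    and dist: "\<And>k. k \<ge> N \<Longrightarrow> infdist (xk k) X \<le> \<tau> * (2 * step_len k + step_len (Suc k))"
    using eventually_error_bound by blast
  define C where "C = 2 * L * (1 + 2 * \<tau>) + L"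
  have "C > 0" unfolding C_def using L_pos \<open>\<tau> > 0\<close> by (simp add: add_pos_pos)
  have "energy (Suc (Suc k)) \<le> C / (c_dec + C) * energy k" if "k \<ge> N" for k
    using energy_two_step_contraction[OF \<open>C > 0\<close>]
      energy_le_step_lens[OF \<open>\<tau> > 0\<close> dist[OF that], folded C_def] by blast
  moreover have "0 < C / (c_dec + C)" "C / (c_dec + C) < 1" using \<open>C > 0\<close> c_dec_pos by auto
  ultimately show ?thesis
    using geometric_bound_if_two_step_contraction[of energy, OF energy_nonneg energy_Suc_le] by blast
qed

lemma F_xk_R_linear: "limsup (\<lambda>k. ereal (root k \<bar>F (xk k) - Fmin\<bar>)) < 1"
proof -
  obtain M q N where "0 < q" "q < 1" and M: "\<And>k. k \<ge> N \<Longrightarrow> energy k \<le> M * q ^ k"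
    using energy_R_linear by blast
  show ?thesis
  proof (rule limsup_root_less_1_if_geometric_bound[OF _ \<open>0 < q\<close> \<open>q < 1\<close>])
    fix k assume "N \<le> k"
    have "\<bar>F (xk k) - Fmin\<bar> \<le> energy k"
      using Fmin_le[OF xk_in_dom[of k]] L_pos unfolding energy_def by simp
    thus "0 \<le> \<bar>F (xk k) - Fmin\<bar> \<and> \<bar>F (xk k) - Fmin\<bar> \<le> M * q ^ k"
      using M[OF \<open>N \<le> k\<close>] by simp
  qed
qed

lemma xk_convergent_R_linear: "\<exists>l. xk \<longlonglongrightarrow> l \<and> limsup (\<lambda>k. ereal (root k (norm (xk k - l)))) < 1"
proof -
  obtain M q N where "0 \<le> M" "0 < q" "q < 1" and M: "\<And>k. k \<ge> N \<Longrightarrow> energy k \<le> M * q ^ k"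
    using energy_R_linear by blast
  define B where "B = sqrt (2 * M / L)"
  have "norm (xk (Suc j) - xk j) \<le> B * sqrt q ^ j" if "j \<ge> N" for j
  proof -
    have "L / 2 * step_len (Suc j) ^ 2 \<le> energy (Suc j)"
      using Fmin_le[OF xk_in_dom] unfolding energy_def by simp
    also have "\<dots> \<le> energy j" by (rule energy_Suc_le)
    also have "\<dots> \<le> M * q ^ j" using M[OF that] .
    finally have "step_len (Suc j) ^ 2 \<le> 2 * M / L * q ^ j" using L_pos by (simp add: field_simps)
    hence "sqrt (step_len (Suc j) ^ 2) \<le> sqrt (2 * M / L * q ^ j)" by (rule real_sqrt_le_mono)
    also have "\<dots> = B * sqrt q ^ j" unfolding B_def by (simp only: real_sqrt_mult real_sqrt_power)
    finally show ?thesis unfolding step_len_Suc[symmetric] using step_len_nonneg by simp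
  qed
  then obtain l where "xk \<longlonglongrightarrow> l"
    and tail: "\<And>k. k \<ge> N \<Longrightarrow> norm (xk k - l) \<le> B / (1 - sqrt q) * sqrt q ^ k"
    using R_linear_limit_if_geometric_increments[of "sqrt q" N xk B] \<open>0 < q\<close> \<open>q < 1\<close> by auto
  moreover have "limsup (\<lambda>k. ereal (root k (norm (xk k - l)))) < 1"
    using tail \<open>0 < q\<close> \<open>q < 1\<close>
    by (intro limsup_root_less_1_if_geometric_bound[where N=N and M="B / (1 - sqrt q)" and q="sqrt q"]) auto
  ultimately show ?thesis by blast
qed

lemma limit_in_X:
  assumes "xk \<longlonglongrightarrow> l"
  shows "l \<in> X"
proof -
  obtain \<tau> N where dist: "\<And>k. k \<ge> N \<Longrightarrow> infdist (xk k) X \<le> \<tau> * (2 * step_len k + step_len (Suc k))"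
    using eventually_error_bound by blast
  have "(\<lambda>k. \<tau> * (2 * step_len k + step_len (Suc k))) \<longlonglongrightarrow> \<tau> * (2 * 0 + 0)"
    by (intro tendsto_intros step_len_tendsto_0 LIMSEQ_Suc)
  hence lim: "(\<lambda>k. \<tau> * (2 * step_len k + step_len (Suc k))) \<longlonglongrightarrow> 0" by simp
  have "(\<lambda>k. infdist (xk k) X) \<longlonglongrightarrow> 0"
  proof (rule tendsto_sandwich[OF _ _ tendsto_const lim])
    show "\<forall>\<^sub>F k in sequentially. 0 \<le> infdist (xk k) X" by (simp add: infdist_nonneg)
    show "\<forall>\<^sub>F k in sequentially. infdist (xk k) X \<le> \<tau> * (2 * step_len k + step_len (Suc k))"
      using dist by (rule eventually_sequentiallyI)
  qed
  moreover have "(\<lambda>k. infdist (xk k) X) \<longlonglongrightarrow> infdist l X" by (intro tendsto_infdist assms)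
  ultimately have "infdist l X = 0" using LIMSEQ_unique by blast
  thus ?thesis using in_closure_iff_infdist_zero[of X l] xm_in_X closed_X by (auto simp: closure_closed)
qed

end

theorem corollary3p8:
  fixes f :: "'a::euclidean_space \<Rightarrow> real" and gf :: "'a \<Rightarrow> 'a"
    and g :: "'a \<Rightarrow> ereal" and L :: real and K :: nat and adaptive :: bool and x0 :: 'a
  assumes g: "proper_closed_convex g"
    and f_convex: "convex_on UNIV f"
    and f_grad: "\<And>x. (f has_derivative (\<lambda>h. inner (gf x) h)) (at x)"
    and L_pos: "L > 0"
    and f_lip: "\<And>x y. norm (gf x - gf y) \<le> L * norm (x - y)"
    and inf_fin: "(INF x. ereal (f x) + g x) > -\<infinity>"
    and attained: "\<exists>xm. \<forall>x. ereal (f xm) + g xm \<le> ereal (f x) + g x"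
    and err_bound: "\<And>\<xi>. ereal \<xi> \<ge> (INF x. ereal (f x) + g x) \<Longrightarrow>
        \<exists>\<epsilon>>0. \<exists>\<tau>>0. \<forall>x.
          norm (prox (\<lambda>z. ereal (1 / L) * g z) (x - (1 / L) *\<^sub>R gf x) - x) < \<epsilon>
          \<and> ereal (f x) + g x \<le> ereal \<xi> \<longrightarrow>
          infdist x {z. - gf z \<in> subdiff g z}
            \<le> \<tau> * norm (prox (\<lambda>z. ereal (1 / L) * g z) (x - (1 / L) *\<^sub>R gf x) - x)"
    and separation: "\<exists>\<delta>>0. \<forall>x\<in>{z. - gf z \<in> subdiff g z}. \<forall>y\<in>{z. - gf z \<in> subdiff g z}.
          ereal (f x) + g x \<noteq> ereal (f y) + g y \<longrightarrow> norm (x - y) \<ge> \<delta>"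
    and K_pos: "K > 0"
    and x0_dom: "g x0 \<noteq> \<infinity>"
  shows "(\<exists>xs. (\<forall>x. ereal (f xs) + g xs \<le> ereal (f x) + g x) \<and>
            limsup (\<lambda>k. ereal (root k (norm (fista_x L gf g K adaptive x0 k - xs)))) < 1)
       \<and> (\<forall>k. g (fista_x L gf g K adaptive x0 k) \<noteq> \<infinity>)
       \<and> limsup (\<lambda>k. ereal (root k \<bar>real_of_ereal
            (ereal (f (fista_x L gf g K adaptive x0 k)) + g (fista_x L gf g K adaptive x0 k)
             - (INF x. ereal (f x) + g x))\<bar>)) < 1"
proof -
  interpret composite f gf g L
    using g f_convex f_grad L_pos f_lip by unfold_locales
  obtain xm where xm: "\<And>x. ereal (f xm) + g xm \<le> ereal (f x) + g x" using attained by blast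
  interpret fista_opt f gf g L K adaptive x0 xm
    using K_pos x0_dom xm by unfold_locales
  have x0: "x0 \<in> dom_g" using x0_dom unfolding dom_g_def by simp
  interpret fista_eb f gf g L K adaptive x0 xm
  proof unfold_locales
    have "(INF x. ereal (f x) + g x) \<le> ereal (F x0)" using Fmin_le[OF x0] by (simp add: INF_eq_Fmin)
    from err_bound[OF this]
    show "\<exists>\<epsilon>>0. \<exists>\<tau>>0. \<forall>x. norm (T x - x) < \<epsilon> \<and> ereal (f x) + g x \<le> ereal (F x0)
            \<longrightarrow> infdist x X \<le> \<tau> * norm (T x - x)"
      unfolding T_def X_def .
  qed
  obtain xs where xs: "xk \<longlonglongrightarrow> xs" "limsup (\<lambda>k. ereal (root k (norm (xk k - xs)))) < 1"
    using xk_convergent_R_linear by blast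
  have gap: "real_of_ereal (ereal (f (xk k)) + g (xk k) - (INF x. ereal (f x) + g x)) = F (xk k) - Fmin"
    for k by (simp add: INF_eq_Fmin ereal_F[OF xk_in_dom])
  show ?thesis
    unfolding fista_x_eq_xk gap
    using X_minimal[OF limit_in_X[OF xs(1)]] xs(2) F_xk_R_linear xk_in_dom by (auto simp: dom_g_def)
qed

end
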